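(* Let $d\ge1$ be an integer, $C>1$ real, and $\rho$ a growth function with $\rho(x)\ge x$ and $\rho(x)\le Cx^d$ for all $x\ge1$. Let $m\ge1$ and $0\le k\le m$ be integers and $\sigma\in\{-1,1\}^m$ with $|\sigma|=k$ and $\operatorname{disc}(\sigma)\ge0$. If $(a,b)=f^\rho_\sigma$, then $$0\le b=2k-m\le k\quad\text{and}\quad 0\le a\le\tau^\rho_{m-k}(k,k)\le(2C)^{(m-k)d^{m-k}}(2k)^{d^{m-k}}.$$
   Context: A growth function is an increasing $\rho:\mathbb{R}\to\mathbb{R}^{\ge0}$. Binary strings are elements of $\{-1,1\}^m$ (the empty string $<>$ for $m=0$); $|\sigma|$ is the number of coordinates equal to $1$; $\operatorname{disc}(\sigma)=\sum_i\sigma_i$; $\sigma\wedge u$ denotes concatenation. $f^\rho_\sigma\in\mathbb{R}^2$ is defined recursively: $f^\rho_{<>}=(0,0)$, and if $f^\rho_\sigma=(a,b)$ then $f^\rho_{\sigma\wedge1}=(a+1,b+1)$ and $f^\rho_{\sigma\wedge-1}=(a+\rho(a+b),b-1)$. The functions $\tau^\rho_i:\mathbb{Z}^2\to\mathbb{R}$ are $\tau^\rho_0(x,y)=x$, $\tau^\rho_{i+1}(x,y)=\tau^\rho_i(x,y)+\rho(\tau^\rho_i(x,y)+y-i)$. *)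

theory Defs
  imports Complex_Main
begin

definition growth_function :: "(real \<Rightarrow> real) \<Rightarrow> bool" where
  "growth_function \<rho> \<longleftrightarrow> mono \<rho> \<and> (\<forall>x. \<rho> x \<ge> 0)"

(* Binary strings sigma in {-1,1}^m are int lists of length m with entries in {-1,1};
   sigma \<and> u (concatenation) is  sigma @ [u]. *)
definition binary_string :: "int list \<Rightarrow> bool" where
  "binary_string \<sigma> \<longleftrightarrow> set \<sigma> \<subseteq> {-1, 1}"

(* |sigma| = number of coordinates equal to 1 *)
definition ones :: "int list \<Rightarrow> nat" where
  "ones \<sigma> = length (filter (\<lambda>x. x = 1) \<sigma>)"

definition disc :: "int list \<Rightarrow> int" where
  "disc \<sigma> = sum_list \<sigma>"

definition f_step :: "(real \<Rightarrow> real) \<Rightarrow> real \<times> real \<Rightarrow> int \<Rightarrow> real \<times> real" where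
  "f_step \<rho> p u = (if u = 1 then (fst p + 1, snd p + 1)
                   else (fst p + \<rho> (fst p + snd p), snd p - 1))"

definition f_rho :: "(real \<Rightarrow> real) \<Rightarrow> int list \<Rightarrow> real \<times> real" where
  "f_rho \<rho> \<sigma> = foldl (f_step \<rho>) (0, 0) \<sigma>"

lemma f_rho_Nil: "f_rho \<rho> [] = (0, 0)"
  by (simp add: f_rho_def)

lemma f_rho_snoc_1: "f_rho \<rho> (\<sigma> @ [1]) = (fst (f_rho \<rho> \<sigma>) + 1, snd (f_rho \<rho> \<sigma>) + 1)"
  by (simp add: f_rho_def f_step_def)

lemma f_rho_snoc_m1: "f_rho \<rho> (\<sigma> @ [-1]) =
   (fst (f_rho \<rho> \<sigma>) + \<rho> (fst (f_rho \<rho> \<sigma>) + snd (f_rho \<rho> \<sigma>)), snd (f_rho \<rho> \<sigma>) - 1)"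
  by (simp add: f_rho_def f_step_def)

fun tau :: "(real \<Rightarrow> real) \<Rightarrow> nat \<Rightarrow> int \<Rightarrow> int \<Rightarrow> real" where
  "tau \<rho> 0 x y = real_of_int x"
| "tau \<rho> (Suc i) x y = tau \<rho> i x y + \<rho> (tau \<rho> i x y + real_of_int y - real i)"

end

theory Submission
  imports Defs
begin

(* Every 1 raises b by one and every -1 lowers it, so b = disc sigma = k - (m - k), and
   disc sigma >= 0 forces m - k <= k. For a, induct along sigma: after p ones and q minus ones,
   a <= tau_q(p,p). Appending 1 is absorbed by tau_q(p+1,p+1) >= tau_q(p,p) + 1 (monotonicity
   of rho); appending -1 adds rho(a + b) <= rho(tau_q(p,p) + p - q), which is exactly the
   increment of tau. Finally X_i = tau_i(k,k) + k satisfies X_(i+1) <= X_i + C X_i^d <= 2C X_i^d,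
   which iterates to the stated bound. *)

lemma binary_string_snocD:
  assumes "binary_string (\<sigma> @ [u])"
  shows "binary_string \<sigma>" and "u = 1 \<or> u = -1"
  using assms by (auto simp: binary_string_def)

lemma ones_le_length: "ones \<sigma> \<le> length \<sigma>"
  by (simp add: ones_def)

lemma ones_snoc_one: "ones (\<sigma> @ [1]) = Suc (ones \<sigma>)"
  by (simp add: ones_def)

lemma ones_snoc_minus_one: "ones (\<sigma> @ [-1]) = ones \<sigma>"
  by (simp add: ones_def)

lemma disc_eq_ones:
  assumes "binary_string \<sigma>"
  shows "disc \<sigma> = int (ones \<sigma>) - int (length \<sigma> - ones \<sigma>)"
  using assms
proof (induction \<sigma> rule: rev_induct)
  case Nil
  then show ?case by (simp add: disc_def ones_def)
next
  case (snoc u \<sigma>)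
  then have IH: "disc \<sigma> = int (ones \<sigma>) - int (length \<sigma> - ones \<sigma>)"
    using binary_string_snocD by blast
  from binary_string_snocD(2)[OF snoc.prems] show ?case
    using IH ones_le_length[of \<sigma>]
    by (auto simp: disc_def ones_snoc_one ones_snoc_minus_one)
qed

lemma snd_f_rho_eq_disc:
  assumes "binary_string \<sigma>"
  shows "snd (f_rho \<rho> \<sigma>) = of_int (disc \<sigma>)"
  using assms
proof (induction \<sigma> rule: rev_induct)
  case Nil
  then show ?case by (simp add: f_rho_Nil disc_def)
next
  case (snoc u \<sigma>)
  then have IH: "snd (f_rho \<rho> \<sigma>) = of_int (disc \<sigma>)"
    using binary_string_snocD by blast
  from binary_string_snocD(2)[OF snoc.prems] show ?case
    using IH by (auto simp: disc_def f_rho_snoc_1 f_rho_snoc_m1)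
qed

lemma tau_ge:
  assumes "\<And>x. \<rho> x \<ge> 0"
  shows "of_int x \<le> tau \<rho> i x y"
proof (induction i)
  case 0
  then show ?case by simp
next
  case (Suc i)
  then show ?case using assms[of "tau \<rho> i x y + of_int y - real i"] by simp
qed

lemma tau_shift_ge:
  assumes "mono \<rho>"
  shows "tau \<rho> q x y + 1 \<le> tau \<rho> q (x + 1) (y + 1)"
proof (induction q)
  case 0
  then show ?case by simp
next
  case (Suc q)
  have "\<rho> (tau \<rho> q x y + of_int y - real q) \<le> \<rho> (tau \<rho> q (x + 1) (y + 1) + of_int (y + 1) - real q)"
    using Suc by (intro monoD[OF assms]) simp
  with Suc show ?case by simp
qed

lemma fst_f_rho_bounds:
  assumes "binary_string \<sigma>" and "growth_function \<rho>"
  shows "0 \<le> fst (f_rho \<rho> \<sigma>) \<and>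
    fst (f_rho \<rho> \<sigma>) \<le> tau \<rho> (length \<sigma> - ones \<sigma>) (ones \<sigma>) (ones \<sigma>)"
  using assms(1)
proof (induction \<sigma> rule: rev_induct)
  case Nil
  then show ?case by (simp add: f_rho_Nil ones_def)
next
  case (snoc u \<sigma>)
  have mono: "mono \<rho>" and nonneg: "\<And>x. \<rho> x \<ge> 0"
    using assms(2) by (auto simp: growth_function_def)
  have bs: "binary_string \<sigma>" and u: "u = 1 \<or> u = -1"
    using binary_string_snocD[OF snoc.prems] by auto
  define p where "p = ones \<sigma>"
  define q where "q = length \<sigma> - ones \<sigma>"
  define a where "a = fst (f_rho \<rho> \<sigma>)"
  have a: "0 \<le> a" "a \<le> tau \<rho> q p p"
    using snoc.IH[OF bs] by (auto simp: a_def p_def q_def)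
  have "p \<le> length \<sigma>"
    using ones_le_length p_def by simp
  from u show ?case
  proof
    assume "u = 1"
    have "a + 1 \<le> tau \<rho> q (Suc p) (Suc p)"
      using a tau_shift_ge[OF mono, of q p p] by (simp add: add.commute)
    with a \<open>u = 1\<close> \<open>p \<le> length \<sigma>\<close> show ?thesis
      by (simp add: f_rho_snoc_1 ones_snoc_one a_def p_def q_def)
  next
    assume "u = -1"
    have "snd (f_rho \<rho> \<sigma>) = real p - real q"
      using snd_f_rho_eq_disc[OF bs] disc_eq_ones[OF bs] \<open>p \<le> length \<sigma>\<close>
      by (simp add: p_def q_def)
    then have "\<rho> (a + snd (f_rho \<rho> \<sigma>)) \<le> \<rho> (tau \<rho> q p p + of_int (int p) - real q)"
      using a by (intro monoD[OF mono]) simp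
    then have "a + \<rho> (a + snd (f_rho \<rho> \<sigma>)) \<le> tau \<rho> (Suc q) p p"
      using a by simp
    moreover have "0 \<le> a + \<rho> (a + snd (f_rho \<rho> \<sigma>))"
      using a nonneg by (simp add: add_nonneg_nonneg)
    ultimately show ?thesis using \<open>u = -1\<close> \<open>p \<le> length \<sigma>\<close>
      by (simp add: f_rho_snoc_m1 ones_snoc_minus_one a_def p_def q_def Suc_diff_le)
  qed
qed

lemma tau_diag_Suc_le:
  fixes d k :: nat and C :: real
  assumes "d \<ge> 1" and "C \<ge> 1" and nonneg: "\<And>x. \<rho> x \<ge> 0"
    and growth: "\<And>x. x \<ge> 1 \<Longrightarrow> \<rho> x \<le> C * x ^ d"
    and "i < 2 * k"
  shows "tau \<rho> (Suc i) k k + k \<le> 2 * C * (tau \<rho> i k k + k) ^ d"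
proof -
  define X where "X = tau \<rho> i k k + k"
  define y where "y = tau \<rho> i k k + k - real i"
  have "real k \<le> tau \<rho> i k k"
    using tau_ge[of \<rho> k i k] nonneg by simp
  then have y: "1 \<le> y" "y \<le> X"
    using \<open>i < 2 * k\<close> by (auto simp: y_def X_def)
  have "\<rho> y \<le> C * y ^ d"
    using growth y by simp
  also have "\<dots> \<le> C * X ^ d"
    using y \<open>C \<ge> 1\<close> by (intro mult_left_mono power_mono) auto
  finally have "\<rho> y \<le> C * X ^ d" .
  moreover have "X \<le> X ^ d"
    using y \<open>d \<ge> 1\<close> by (metis One_nat_def order_trans power_increasing power_one_right)
  moreover have "X ^ d \<le> C * X ^ d"
    using y \<open>C \<ge> 1\<close> by simp
  moreover have "tau \<rho> (Suc i) k k + k = X + \<rho> y"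
    by (simp add: X_def y_def)
  ultimately show ?thesis
    by (simp add: X_def)
qed

lemma tau_diag_le:
  fixes d k :: nat and C :: real
  assumes "d \<ge> 1" and "C \<ge> 1" and "\<And>x. \<rho> x \<ge> 0"
    and "\<And>x. x \<ge> 1 \<Longrightarrow> \<rho> x \<le> C * x ^ d"
  shows "i \<le> 2 * k \<Longrightarrow> tau \<rho> i k k + k \<le> (2 * C) ^ (i * d ^ i) * (2 * real k) ^ (d ^ i)"
proof (induction i)
  case 0
  then show ?case by simp
next
  case (Suc i)
  define B where "B = (2 * C) ^ (i * d ^ i) * (2 * real k) ^ (d ^ i)"
  have "0 \<le> tau \<rho> i k k + k"
    using tau_ge[of \<rho> k i k] assms(3) by simp
  have "tau \<rho> (Suc i) k k + k \<le> 2 * C * (tau \<rho> i k k + k) ^ d"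
    using tau_diag_Suc_le[OF assms] Suc.prems by simp
  also have "\<dots> \<le> 2 * C * B ^ d"
    using Suc \<open>0 \<le> tau \<rho> i k k + k\<close> \<open>C \<ge> 1\<close>
    by (intro mult_left_mono power_mono) (auto simp: B_def)
  also have "\<dots> = (2 * C) ^ (1 + i * d ^ Suc i) * (2 * real k) ^ (d ^ Suc i)"
    by (simp add: B_def power_mult_distrib power_mult[symmetric] mult.commute mult.left_commute)
  also have "\<dots> \<le> (2 * C) ^ (Suc i * d ^ Suc i) * (2 * real k) ^ (d ^ Suc i)"
    using \<open>d \<ge> 1\<close> \<open>C \<ge> 1\<close> by (intro mult_right_mono power_increasing) auto
  finally show ?case .
qed

theorem mainTheorem18:
  fixes d m k :: nat and C :: real and \<rho> :: "real \<Rightarrow> real" and \<sigma> :: "int list"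
    and a b :: real
  assumes "d \<ge> 1" and "C > 1"
    and "growth_function \<rho>"
    and "\<And>x. x \<ge> 1 \<Longrightarrow> \<rho> x \<ge> x"
    and "\<And>x. x \<ge> 1 \<Longrightarrow> \<rho> x \<le> C * x ^ d"
    and "m \<ge> 1" and "k \<le> m"
    and "binary_string \<sigma>" and "length \<sigma> = m"
    and "ones \<sigma> = k" and "disc \<sigma> \<ge> 0"
    and "(a, b) = f_rho \<rho> \<sigma>"
  shows "0 \<le> b \<and> b = 2 * real k - real m \<and> b \<le> real k
       \<and> 0 \<le> a \<and> a \<le> tau \<rho> (m - k) (int k) (int k)
       \<and> tau \<rho> (m - k) (int k) (int k)
           \<le> (2 * C) ^ ((m - k) * d ^ (m - k)) * (2 * real k) ^ (d ^ (m - k))"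
proof -
  have disc: "disc \<sigma> = int k - int (m - k)"
    using disc_eq_ones[OF assms(8)] assms(9,10) by simp
  have b: "b = of_int (disc \<sigma>)"
    using snd_f_rho_eq_disc[OF assms(8)] assms(12) by (metis snd_conv)
  have a: "0 \<le> a \<and> a \<le> tau \<rho> (m - k) k k"
    using fst_f_rho_bounds[OF assms(8,3)] assms(9,10,12) by (metis fst_conv)
  have "m - k \<le> k"
    using disc \<open>disc \<sigma> \<ge> 0\<close> by simp
  then have "tau \<rho> (m - k) k k + k \<le> (2 * C) ^ ((m - k) * d ^ (m - k)) * (2 * real k) ^ (d ^ (m - k))"
    using assms(1,2,3,5) by (intro tau_diag_le) (auto simp: growth_function_def)
  then show ?thesis
    using a b disc \<open>m - k \<le> k\<close> \<open>k \<le> m\<close> by auto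
qed

end
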